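(* Let $K$ be a compact and connected subgroup of $U(N)$, let $A\in\mathbb{C}^{N\times N}$ and let $\varphi_0\in\mathbb{R}$. The following are equivalent: (a) $e^{i\varphi_0}\mathcal{O}_K(A)=\mathcal{O}_K(A)$; (b) $e^{i\varphi_0}W_K(C,A)=W_K(C,A)$ for all $C\in\mathbb{C}^{N\times N}$; (c) $e^{i\varphi_0}W_K(A,A)=W_K(A,A)$. Moreover, if $\varphi_0$ is an irrational multiple of $2\pi$ and one of (a), (b), (c) holds for $\varphi_0$, then all of them hold with $\varphi_0$ replaced by any $\varphi\in\mathbb{R}$.
   Context: $U(N)$ is the group of unitary $N\times N$ complex matrices. For a compact connected subgroup $K\subset U(N)$ and $C,A\in\mathbb{C}^{N\times N}$, the relative $C$-numerical range is $W_K(C,A)=\{\mathrm{tr}(C^\dagger UAU^\dagger)\mid U\in K\}$, and the $K$-orbit of $A$ is $\mathcal{O}_K(A)=\{UAU^\dagger\mid U\in K\}$. *)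

theory Defs
  imports "HOL-Analysis.Analysis"
begin

text \<open>N x N complex matrices are modelled as complex^'n^'n, N = CARD('n).\<close>

definition cadj :: "complex^'n^'n \<Rightarrow> complex^'n^'n" where
  "cadj A = (\<chi> i j. cnj (A $ j $ i))"

definition unitary_group :: "(complex^'n^'n) set" where
  "unitary_group = {U. U ** cadj U = mat 1 \<and> cadj U ** U = mat 1}"

definition subgroup_of_U :: "(complex^'n^'n) set \<Rightarrow> bool" where
  "subgroup_of_U K \<longleftrightarrow> K \<subseteq> unitary_group \<and> mat 1 \<in> K \<and>
     (\<forall>U\<in>K. \<forall>V\<in>K. U ** V \<in> K) \<and> (\<forall>U\<in>K. cadj U \<in> K)"

definition cscale :: "complex \<Rightarrow> complex^'n^'n \<Rightarrow> complex^'n^'n" where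
  "cscale c A = (\<chi> i j. c * A $ i $ j)"

definition orbit_K :: "(complex^'n^'n) set \<Rightarrow> complex^'n^'n \<Rightarrow> (complex^'n^'n) set" where
  "orbit_K K A = {U ** A ** cadj U | U. U \<in> K}"

definition rel_num_range ::
  "(complex^'n^'n) set \<Rightarrow> complex^'n^'n \<Rightarrow> complex^'n^'n \<Rightarrow> complex set" where
  "rel_num_range K C A = {trace (cadj C ** (U ** A ** cadj U)) | U. U \<in> K}"

end

theory Submission
  imports Defs
begin

(*
  For a unit scalar c, invariance of W(A,A) under multiplication by c puts c tr(A* A) into
  W(A,A), i.e. tr(A* U A U* ) = c tr(A* A) for some U in K.  As U A U* has the same
  Frobenius norm as A, this is the equality case of the Cauchy-Schwarz inequality, so
  U A U* = c A.  Hence c A and, in the same way, c^-1 A lie in the orbit, which makes the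
  orbit invariant under c; and orbit invariance passes to every W(C,A), the image of the
  orbit under the linear map B |-> tr(C* B).
  If c = exp(i phi0) with phi0/2pi irrational, the powers of c are dense in the unit circle,
  and the set of scalars e with e A in the (compact) orbit is closed and contains them, so
  it contains the whole circle.
*)

lemma cadj_mult: "cadj (A ** B) = cadj B ** cadj (A::complex^'n^'n)"
  by (simp add: cadj_def matrix_matrix_mult_def vec_eq_iff mult.commute)

lemma cadj_cadj [simp]: "cadj (cadj A) = A"
  by (simp add: cadj_def vec_eq_iff)

lemma cadj_mat_1 [simp]: "cadj (mat 1) = (mat 1 :: complex^'n^'n)"
  by (simp add: cadj_def mat_def vec_eq_iff)

lemma cscale_conjugate: "cscale c (U ** A ** cadj U) = U ** cscale c A ** cadj (U::complex^'n^'n)"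
  by (simp add: cscale_def matrix_matrix_mult_def vec_eq_iff sum_distrib_left sum_distrib_right
      mult.assoc mult.left_commute)

lemma cscale_cscale [simp]: "cscale c (cscale d A) = cscale (c * d) A"
  by (simp add: cscale_def vec_eq_iff mult.assoc)

lemma cscale_1 [simp]: "cscale 1 A = A"
  by (simp add: cscale_def vec_eq_iff)

lemma trace_mult_cscale: "trace (C ** cscale c B) = c * trace (C ** (B::complex^'n^'n))"
  by (simp add: cscale_def trace_def matrix_matrix_mult_def sum_distrib_left mult.left_commute)

lemma trace_cadj_mult:
  "trace (cadj A ** B) = (\<Sum>i\<in>UNIV. \<Sum>k\<in>UNIV. cnj (A$k$i) * (B::complex^'n^'n)$k$i)"
  by (simp add: trace_def matrix_matrix_mult_def cadj_def)

lemma trace_cadj_self: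
  "trace (cadj A ** A) = complex_of_real (\<Sum>i\<in>UNIV. \<Sum>k\<in>UNIV. (cmod (A$k$i))\<^sup>2)"
  unfolding trace_cadj_mult of_real_sum complex_norm_square by (simp add: mult.commute)

lemma trace_cadj_self_eq_0_iff: "trace (cadj A ** A) = 0 \<longleftrightarrow> A = 0"
  unfolding trace_cadj_self of_real_eq_0_iff by (auto simp: sum_nonneg_eq_0_iff sum_nonneg vec_eq_iff)

lemma trace_cadj_conjugate_self:
  assumes "U \<in> unitary_group"
  shows "trace (cadj (U ** A ** cadj U) ** (U ** A ** cadj U)) = trace (cadj A ** A)"
proof -
  have U: "cadj U ** U = mat 1" using assms by (simp add: unitary_group_def)
  have "cadj (U ** A ** cadj U) ** (U ** A ** cadj U) = U ** (cadj A ** A) ** cadj U"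
    by (simp add: cadj_mult matrix_mul_assoc) (metis matrix_mul_assoc matrix_mul_rid U)
  also have "trace \<dots> = trace ((cadj A ** A) ** (cadj U ** U))"
    by (metis matrix_mul_assoc trace_mul_sym)
  finally show ?thesis by (simp add: U)
qed

lemma eq_cscale_if_trace_cadj_eq:
  fixes A B :: "complex^'n^'n"
  assumes c: "cmod c = 1" and norm: "trace (cadj B ** B) = trace (cadj A ** A)"
    and inner: "trace (cadj A ** B) = c * trace (cadj A ** A)"
  shows "B = cscale c A"
proof -
  have cnj_c: "cnj c * c = 1"
    using c by (metis complex_norm_square mult.commute of_real_1 power_one)
  have real: "cnj (trace (cadj A ** A)) = trace (cadj A ** A)"
    by (simp add: trace_cadj_self)
  have "trace (cadj (B - cscale c A) ** (B - cscale c A))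
      = trace (cadj B ** B) - cnj c * trace (cadj A ** B) - c * cnj (trace (cadj A ** B))
        + cnj c * c * trace (cadj A ** A)"
    by (simp add: trace_cadj_mult cscale_def algebra_simps sum.distrib sum_subtractf
        sum_distrib_left)
  also have "\<dots> = 0"
    using norm inner cnj_c real by (simp add: algebra_simps)
  finally show ?thesis by (simp add: trace_cadj_self_eq_0_iff)
qed

lemma orbit_K_eq_image: "orbit_K K A = (\<lambda>U. U ** A ** cadj U) ` K"
  by (auto simp: orbit_K_def)

lemma rel_num_range_eq_image: "rel_num_range K C A = (\<lambda>B. trace (cadj C ** B)) ` orbit_K K A"
  by (auto simp: rel_num_range_def orbit_K_def)

lemma self_mem_orbit_K:
  assumes "subgroup_of_U K"
  shows "A \<in> orbit_K K A"
proof -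
  have "mat 1 \<in> K" using assms by (simp add: subgroup_of_U_def)
  then show ?thesis
    unfolding orbit_K_eq_image by (force simp: matrix_mul_lid matrix_mul_rid)
qed

lemma conjugate_mem_orbit_K:
  assumes K: "subgroup_of_U K" and "B \<in> orbit_K K A" and "U \<in> K"
  shows "U ** B ** cadj U \<in> orbit_K K A"
proof -
  obtain V where "V \<in> K" and B: "B = V ** A ** cadj V"
    using \<open>B \<in> orbit_K K A\<close> by (auto simp: orbit_K_def)
  then have "U ** V \<in> K" using K \<open>U \<in> K\<close> by (simp add: subgroup_of_U_def)
  moreover have "U ** B ** cadj U = (U ** V) ** A ** cadj (U ** V)"
    by (simp add: B cadj_mult matrix_mul_assoc)
  ultimately show ?thesis by (auto simp: orbit_K_def)
qed

lemma cscale_image_orbit_K_subset: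
  assumes "subgroup_of_U K" and "cscale c A \<in> orbit_K K A"
  shows "cscale c ` orbit_K K A \<subseteq> orbit_K K A"
  using conjugate_mem_orbit_K[OF assms] by (auto simp: orbit_K_def cscale_conjugate)

lemma cscale_image_orbit_K_eq:
  assumes K: "subgroup_of_U K" and "c * d = 1"
    and "cscale c A \<in> orbit_K K A" and "cscale d A \<in> orbit_K K A"
  shows "cscale c ` orbit_K K A = orbit_K K A"
proof
  show "cscale c ` orbit_K K A \<subseteq> orbit_K K A"
    using cscale_image_orbit_K_subset[OF K] assms(3) .
  have "orbit_K K A = cscale c ` cscale d ` orbit_K K A"
    using \<open>c * d = 1\<close> by (simp add: image_image)
  also have "\<dots> \<subseteq> cscale c ` orbit_K K A"
    using cscale_image_orbit_K_subset[OF K assms(4)] by blast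
  finally show "orbit_K K A \<subseteq> cscale c ` orbit_K K A" .
qed

lemma rel_num_range_rotation_if_orbit_K_rotation:
  assumes "cscale c ` orbit_K K A = orbit_K K A"
  shows "(\<lambda>z. c * z) ` rel_num_range K C A = rel_num_range K C A"
proof -
  have "(\<lambda>z. c * z) ` rel_num_range K C A = (\<lambda>B. trace (cadj C ** B)) ` cscale c ` orbit_K K A"
    unfolding rel_num_range_eq_image image_image trace_mult_cscale ..
  then show ?thesis using assms by (simp add: rel_num_range_eq_image)
qed

lemma cscale_mem_orbit_K_if_mem_rel_num_range:
  assumes K: "subgroup_of_U K" and "cmod c = 1"
    and "c * trace (cadj A ** A) \<in> rel_num_range K A A"
  shows "cscale c A \<in> orbit_K K A"
proof -
  obtain U where "U \<in> K" and U: "trace (cadj A ** (U ** A ** cadj U)) = c * trace (cadj A ** A)"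
    using assms(3) by (auto simp: rel_num_range_def)
  then have "U \<in> unitary_group" using K by (auto simp: subgroup_of_U_def)
  then have "cscale c A = U ** A ** cadj U"
    by (rule eq_cscale_if_trace_cadj_eq[OF \<open>cmod c = 1\<close> trace_cadj_conjugate_self U, symmetric])
  with \<open>U \<in> K\<close> show ?thesis
    unfolding orbit_K_eq_image by (rule rev_image_eqI)
qed

lemma orbit_K_rotation_if_rel_num_range_rotation:
  assumes K: "subgroup_of_U K" and c: "cmod c = 1"
    and W: "(\<lambda>z. c * z) ` rel_num_range K A A = rel_num_range K A A"
  shows "cscale c ` orbit_K K A = orbit_K K A"
proof -
  have c_cnj: "c * cnj c = 1"
    using c by (metis complex_norm_square of_real_1 power_one)
  have tr: "trace (cadj A ** A) \<in> rel_num_range K A A"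
    using self_mem_orbit_K[OF K] by (auto simp: rel_num_range_eq_image)
  then have "c * trace (cadj A ** A) \<in> rel_num_range K A A"
    using W by blast
  then have "cscale c A \<in> orbit_K K A"
    by (rule cscale_mem_orbit_K_if_mem_rel_num_range[OF K c])
  moreover have "cnj c * trace (cadj A ** A) \<in> rel_num_range K A A"
  proof -
    from tr W obtain w where "w \<in> rel_num_range K A A" and "trace (cadj A ** A) = c * w"
      by (metis image_iff)
    then show ?thesis using c_cnj by (metis mult.assoc mult.commute mult_1)
  qed
  then have "cscale (cnj c) A \<in> orbit_K K A"
    using c cscale_mem_orbit_K_if_mem_rel_num_range[OF K, of "cnj c"] by simp
  ultimately show ?thesis
    by (rule cscale_image_orbit_K_eq[OF K c_cnj])
qed

lemma exp_mem_closure_powers_if_irrational: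
  fixes \<phi>0 \<phi> :: real
  assumes irr: "\<phi>0 / (2 * pi) \<notin> \<rat>"
  shows "exp (\<i> * of_real \<phi>) \<in> closure (range (\<lambda>n::nat. exp (\<i> * of_real \<phi>0) ^ n))"
proof -
  define g :: "real \<Rightarrow> complex" where "g t = exp (2 * pi * \<i> * of_real t)" for t
  define D where "D = {of_int k * (\<phi>0 / (2 * pi)) - of_int h | k h. k > 0}"
  have "x \<in> closure D" for x
  proof (unfold closure_approachable, intro allI impI)
    fix \<epsilon> :: real assume "\<epsilon> > 0"
    then obtain h k where "k > 0" and "\<bar>of_int k * (\<phi>0 / (2 * pi)) - of_int h - x\<bar> < \<epsilon>"
      by (rule sequence_of_fractional_parts_is_dense[OF irr])
    then show "\<exists>y\<in>D. dist y x < \<epsilon>" unfolding D_def dist_real_def by blast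
  qed
  moreover have "g ` D \<subseteq> closure (range (\<lambda>n::nat. exp (\<i> * of_real \<phi>0) ^ n))"
  proof
    fix z assume "z \<in> g ` D"
    then obtain k h :: int where "k > 0" and z: "z = g (of_int k * (\<phi>0 / (2 * pi)) - of_int h)"
      unfolding D_def by blast
    have "z = exp (of_nat (nat k) * (\<i> * of_real \<phi>0)) * exp (- (2 * of_int h * pi * \<i>))"
      using \<open>k > 0\<close> by (simp add: z g_def exp_add[symmetric] algebra_simps)
    also have "\<dots> = exp (\<i> * of_real \<phi>0) ^ nat k"
      using exp_integer_2pi[of "of_int h"] by (simp add: exp_of_nat_mult exp_minus)
    finally have "z \<in> range (\<lambda>n::nat. exp (\<i> * of_real \<phi>0) ^ n)" by blast
    then show "z \<in> closure (range (\<lambda>n::nat. exp (\<i> * of_real \<phi>0) ^ n))"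
      by (rule closure_subset[THEN subsetD])
  qed
  then have "g ` closure D \<subseteq> closure (range (\<lambda>n::nat. exp (\<i> * of_real \<phi>0) ^ n))"
    by (intro image_closure_subset) (auto simp: g_def intro!: continuous_intros)
  moreover have "exp (\<i> * of_real \<phi>) = g (\<phi> / (2 * pi))"
    by (simp add: g_def)
  ultimately show ?thesis by blast
qed

lemma closed_cscale_mem_orbit_K:
  assumes "compact K"
  shows "closed {e. cscale e A \<in> orbit_K K A}"
proof -
  have "compact (orbit_K K A)"
    unfolding orbit_K_eq_image using assms
    by (intro compact_continuous_image) (auto simp: matrix_matrix_mult_def cadj_def intro!: continuous_intros)
  then have "closed (orbit_K K A)" by (rule compact_imp_closed)
  moreover have "continuous (at e) (\<lambda>e. cscale e A)" for e
    using continuous_on_eq_continuous_at[of UNIV "\<lambda>e. cscale e A"]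
    by (auto simp: cscale_def intro!: continuous_intros)
  ultimately have "closed ((\<lambda>e. cscale e A) -` orbit_K K A)"
    by (rule continuous_closed_vimage)
  then show ?thesis by (simp only: vimage_def)
qed

lemma orbit_K_rotation_if_irrational_rotation:
  assumes K: "subgroup_of_U K" and "compact K"
    and irr: "\<phi>0 / (2 * pi) \<notin> \<rat>"
    and rot: "cscale (exp (\<i> * of_real \<phi>0)) ` orbit_K K A = orbit_K K A"
  shows "cscale (exp (\<i> * of_real \<phi>)) ` orbit_K K A = orbit_K K A"
proof -
  let ?S = "{e. cscale e A \<in> orbit_K K A}"
  have "exp (\<i> * of_real \<phi>0) ^ n \<in> ?S" for n
  proof (induction n)
    case 0
    then show ?case using self_mem_orbit_K[OF K] by simp
  next
    case (Suc n)
    then have "cscale (exp (\<i> * of_real \<phi>0)) (cscale (exp (\<i> * of_real \<phi>0) ^ n) A) \<in> orbit_K K A"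
      using rot by blast
    then show ?case by simp
  qed
  then have "closure (range (\<lambda>n::nat. exp (\<i> * of_real \<phi>0) ^ n)) \<subseteq> ?S"
    by (intro closure_minimal closed_cscale_mem_orbit_K[OF \<open>compact K\<close>]) blast
  then have "exp (\<i> * of_real \<psi>) \<in> ?S" for \<psi>
    using exp_mem_closure_powers_if_irrational[OF irr] by blast
  moreover have "exp (\<i> * of_real \<phi>) * exp (\<i> * of_real (- \<phi>)) = 1"
    by (simp add: exp_add[symmetric])
  ultimately show ?thesis
    using cscale_image_orbit_K_eq[OF K] by blast
qed

theorem proposition2p12:
  fixes K :: "(complex^'n^'n) set" and A :: "complex^'n^'n" and \<phi>0 :: real
  assumes "subgroup_of_U K" and "compact K" and "connected K"
  shows "((cscale (exp (\<i> * of_real \<phi>0))) ` orbit_K K A = orbit_K K A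
            \<longleftrightarrow> (\<forall>C. (\<lambda>z. exp (\<i> * of_real \<phi>0) * z) ` rel_num_range K C A = rel_num_range K C A))
       \<and> ((\<forall>C. (\<lambda>z. exp (\<i> * of_real \<phi>0) * z) ` rel_num_range K C A = rel_num_range K C A)
            \<longleftrightarrow> (\<lambda>z. exp (\<i> * of_real \<phi>0) * z) ` rel_num_range K A A = rel_num_range K A A)
       \<and> (\<phi>0 / (2 * pi) \<notin> \<rat> \<and>
          ((cscale (exp (\<i> * of_real \<phi>0))) ` orbit_K K A = orbit_K K A
           \<or> (\<forall>C. (\<lambda>z. exp (\<i> * of_real \<phi>0) * z) ` rel_num_range K C A = rel_num_range K C A)
           \<or> (\<lambda>z. exp (\<i> * of_real \<phi>0) * z) ` rel_num_range K A A = rel_num_range K A A)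
          \<longrightarrow> (\<forall>\<phi>::real.
                (cscale (exp (\<i> * of_real \<phi>))) ` orbit_K K A = orbit_K K A
              \<and> (\<forall>C. (\<lambda>z. exp (\<i> * of_real \<phi>) * z) ` rel_num_range K C A = rel_num_range K C A)
              \<and> (\<lambda>z. exp (\<i> * of_real \<phi>) * z) ` rel_num_range K A A = rel_num_range K A A))"
proof -
  let ?a = "\<lambda>\<phi>::real. cscale (exp (\<i> * of_real \<phi>)) ` orbit_K K A = orbit_K K A"
  let ?b = "\<lambda>\<phi>::real. \<forall>C. (\<lambda>z. exp (\<i> * of_real \<phi>) * z) ` rel_num_range K C A = rel_num_range K C A"
  let ?c = "\<lambda>\<phi>::real. (\<lambda>z. exp (\<i> * of_real \<phi>) * z) ` rel_num_range K A A = rel_num_range K A A"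
  have a_imp_b: "?a \<phi> \<Longrightarrow> ?b \<phi>" for \<phi>
    using rel_num_range_rotation_if_orbit_K_rotation by blast
  have b_imp_c: "?b \<phi> \<Longrightarrow> ?c \<phi>" for \<phi>
    by blast
  have c_imp_a: "?c \<phi> \<Longrightarrow> ?a \<phi>" for \<phi>
    by (rule orbit_K_rotation_if_rel_num_range_rotation[OF \<open>subgroup_of_U K\<close>]) simp
  have irrational: "\<phi>0 / (2 * pi) \<notin> \<rat> \<Longrightarrow> ?a \<phi>0 \<Longrightarrow> ?a \<phi>" for \<phi>
    by (rule orbit_K_rotation_if_irrational_rotation[OF \<open>subgroup_of_U K\<close> \<open>compact K\<close>])
  show ?thesis
    using a_imp_b b_imp_c c_imp_a irrational by meson
qed

end
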